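(* Let $n\ge2$, let $G$ be the Lie group of invertible $n\times n$ upper triangular real matrices, and let $Z$ be the center of $G$ (the nonzero real scalar matrices). Then $G/Z$ has the topological $R_\infty$-property.
   Context: For an automorphism $\varphi$ of a group $G$, the $\varphi$-twisted conjugacy classes are the equivalence classes of the relation $x\sim_\varphi y$ iff $y=gx\varphi(g)^{-1}$ for some $g\in G$; $R(\varphi)\in\mathbb{N}\cup\{\infty\}$ is their number. A topological group $G$ has the topological $R_\infty$-property if $R(\varphi)=\infty$ for every automorphism $\varphi$ of $G$ that is a homeomorphism (for a Lie group: every continuous automorphism). *)

theory Defs
  imports "HOL-Analysis.Analysis" "HOL-Algebra.Algebra"
begin

text \<open>Invertible upper triangular real matrices, indexed by a finite linearly ordered type 'n
  (so n = CARD('n)).\<close>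
definition UT_carrier :: "(real^('n::{finite,linorder})^('n::{finite,linorder})) set" where
  "UT_carrier = {A. invertible A \<and> (\<forall>i j. j < i \<longrightarrow> A $ i $ j = 0)}"

definition UT_group :: "(real^('n::{finite,linorder})^('n::{finite,linorder})) monoid" where
  "UT_group = \<lparr>carrier = UT_carrier, mult = (**), one = mat 1\<rparr>"

definition group_center :: "('a, 'b) monoid_scheme \<Rightarrow> 'a set" where
  "group_center G = {z \<in> carrier G. \<forall>g \<in> carrier G. z \<otimes>\<^bsub>G\<^esub> g = g \<otimes>\<^bsub>G\<^esub> z}"

definition quotient_group_topology ::
  "'a topology \<Rightarrow> ('a, 'b) monoid_scheme \<Rightarrow> 'a set \<Rightarrow> 'a set topology" where
  "quotient_group_topology TX G H = topology (\<lambda>U. U \<subseteq> carrier (G Mod H) \<and>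
      openin TX {g \<in> carrier G. r_coset G H g \<in> U})"

lemma istopology_quotient_group_topology:
  "istopology (\<lambda>U. U \<subseteq> carrier (G Mod H) \<and> openin TX {g \<in> carrier G. r_coset G H g \<in> U})"
proof -
  have e1: "\<And>S T. {g \<in> carrier G. r_coset G H g \<in> S \<inter> T} =
        {g \<in> carrier G. r_coset G H g \<in> S} \<inter> {g \<in> carrier G. r_coset G H g \<in> T}" by blast
  have e2: "\<And>K. {g \<in> carrier G. r_coset G H g \<in> \<Union>K} = (\<Union>S\<in>K. {g \<in> carrier G. r_coset G H g \<in> S})" by blast
  show ?thesis unfolding istopology_def e1 e2 by (auto intro!: openin_Int openin_Union)
qed

definition twisted_conj :: "('a, 'b) monoid_scheme \<Rightarrow> ('a \<Rightarrow> 'a) \<Rightarrow> ('a \<times> 'a) set" where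
  "twisted_conj G \<phi> = {(x, y). x \<in> carrier G \<and> y \<in> carrier G \<and>
      (\<exists>g \<in> carrier G. y = g \<otimes>\<^bsub>G\<^esub> x \<otimes>\<^bsub>G\<^esub> inv\<^bsub>G\<^esub> (\<phi> g))}"

definition R_infinite :: "('a, 'b) monoid_scheme \<Rightarrow> ('a \<Rightarrow> 'a) \<Rightarrow> bool" where
  "R_infinite G \<phi> \<longleftrightarrow> infinite (carrier G // twisted_conj G \<phi>)"

definition top_R_infinity :: "('a, 'b) monoid_scheme \<Rightarrow> 'a topology \<Rightarrow> bool" where
  "top_R_infinity G T \<longleftrightarrow>
     (\<forall>\<phi>. \<phi> \<in> iso G G \<and> homeomorphic_map T T \<phi> \<longrightarrow> R_infinite G \<phi>)"

end

theory Submission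
  imports Defs
begin

(* Write G for the invertible upper triangular n x n matrices and Q = G/Z, Z the nonzero scalars.
  The ratio chi(g) = g11/gnn of the extreme diagonal entries is a character of G trivial on Z,
  hence a character of Q with image the nonzero reals. For n >= 2 the elements of Q commuting
  with all commutators are exactly the classes of u(t) = 1 + t E1n, and g u(t) g^-1 = u(chi(g) t).
  An automorphism phi of Q preserves this set, so phi(u(t)) = u(L t) with L additive and
  L(chi(g) t) = chi(phi g) L(t). Then t |-> L t / L 1 is a ring endomorphism of the reals, hence the
  identity, which gives chi o phi = chi. So chi is constant on phi-twisted conjugacy classes and
  takes infinitely many values. *)

section \<open>Twisted conjugacy classes and commutators\<close>

lemma R_infinite_if_invariant_character:
  fixes G (structure) and f :: "'a \<Rightarrow> 'c::ab_semigroup_mult"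
  assumes G: "group G" and hom: "\<phi> \<in> hom G G"
    and mult: "\<And>x y. x \<in> carrier G \<Longrightarrow> y \<in> carrier G \<Longrightarrow> f (x \<otimes> y) = f x * f y"
    and invariant: "\<And>x. x \<in> carrier G \<Longrightarrow> f (\<phi> x) = f x"
    and infinite: "infinite (f ` carrier G)"
  shows "R_infinite G \<phi>"
proof -
  interpret group_hom G G \<phi>
    using G hom by (simp add: group_hom_def group_hom_axioms_def)
  let ?r = "twisted_conj G \<phi>"
  have same_class: "f y = f x" if xy: "(x, y) \<in> ?r" for x y
  proof -
    have x: "x \<in> carrier G"
      using xy by (simp add: twisted_conj_def)
    obtain g where g: "g \<in> carrier G" and y: "y = g \<otimes> x \<otimes> inv (\<phi> g)"
      using xy by (auto simp: twisted_conj_def)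
    have "f y = f x * (f (\<phi> g) * f (inv (\<phi> g)))"
      using g x by (simp add: y mult invariant mult_ac)
    also have "\<dots> = f x * f \<one>"
      using mult[of "\<phi> g" "inv (\<phi> g)"] g by simp
    also have "\<dots> = f x"
      using mult[of x \<one>] x by simp
    finally show ?thesis .
  qed
  have "(x, x) \<in> ?r" if "x \<in> carrier G" for x
    using that unfolding twisted_conj_def by (auto intro!: bexI[of _ \<one>])
  then have "f ` carrier G \<subseteq> (\<Union>K \<in> carrier G // ?r. f ` K)"
    unfolding quotient_def by blast
  moreover have "finite (f ` K)" if K: "K \<in> carrier G // ?r" for K
  proof -
    obtain x where "K = ?r `` {x}"
      using K unfolding quotient_def by blast
    then have "f ` K \<subseteq> {f x}"
      using same_class by auto
    then show ?thesis
      by (rule finite_subset) simp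
  qed
  ultimately show ?thesis
    unfolding R_infinite_def using infinite by (meson finite_UN_I finite_subset)
qed

definition centralizes_commutators :: "('a, 'b) monoid_scheme \<Rightarrow> 'a \<Rightarrow> bool" where
  "centralizes_commutators G z \<longleftrightarrow> (\<forall>k \<in> derived_set G (carrier G). z \<otimes>\<^bsub>G\<^esub> k = k \<otimes>\<^bsub>G\<^esub> z)"

lemma centralizes_commutators_iso:
  fixes G (structure)
  assumes G: "group G" and iso: "\<phi> \<in> iso G G"
    and z: "z \<in> carrier G" and centralizes: "centralizes_commutators G z"
  shows "centralizes_commutators G (\<phi> z)"
  unfolding centralizes_commutators_def
proof
  interpret group_hom G G \<phi>
    using G iso by (simp add: group_hom_def group_hom_axioms_def iso_def)
  have onto: "\<phi> ` carrier G = carrier G"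
    using iso by (simp add: iso_def bij_betw_def)
  fix k assume "k \<in> derived_set G (carrier G)"
  then obtain a b where "a \<in> carrier G" "b \<in> carrier G" and k: "k = a \<otimes> b \<otimes> inv a \<otimes> inv b"
    by blast
  then obtain a' b' where a': "a' \<in> carrier G" "a = \<phi> a'" and b': "b' \<in> carrier G" "b = \<phi> b'"
    using onto by (metis imageE)
  define k' where "k' = a' \<otimes> b' \<otimes> inv a' \<otimes> inv b'"
  have k': "k' \<in> carrier G" "k = \<phi> k'"
    using a' b' by (simp_all add: k k'_def)
  have "z \<otimes> k' = k' \<otimes> z"
    using centralizes a' b' unfolding centralizes_commutators_def k'_def by blast
  then show "\<phi> z \<otimes> k = k \<otimes> \<phi> z"
    using z k' by (metis hom_mult)
qed

lemma group_center_normal: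
  fixes G (structure)
  assumes "group G"
  shows "group_center G \<lhd> G"
proof -
  interpret group G by fact
  have carrier: "z \<in> carrier G" if "z \<in> group_center G" for z
    using that by (simp add: group_center_def)
  have comm: "z \<otimes> g = g \<otimes> z" if "z \<in> group_center G" "g \<in> carrier G" for z g
    using that by (simp add: group_center_def)
  have "subgroup (group_center G) G"
  proof (rule subgroupI)
    show "group_center G \<subseteq> carrier G" "group_center G \<noteq> {}"
      by (auto simp: group_center_def)
  next
    fix a assume a: "a \<in> group_center G"
    have "inv a \<otimes> g = g \<otimes> inv a" if g: "g \<in> carrier G" for g
    proof -
      have "inv a \<otimes> g = inv a \<otimes> (g \<otimes> a) \<otimes> inv a"
        using carrier[OF a] g by (simp add: m_assoc)
      also have "\<dots> = inv a \<otimes> (a \<otimes> g) \<otimes> inv a"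
        using comm[OF a g] by simp
      also have "\<dots> = g \<otimes> inv a"
        using carrier[OF a] g by (simp add: m_assoc[symmetric])
      finally show ?thesis .
    qed
    then show "inv a \<in> group_center G"
      using carrier[OF a] by (simp add: group_center_def)
  next
    fix a b assume a: "a \<in> group_center G" and b: "b \<in> group_center G"
    have "a \<otimes> b \<otimes> g = g \<otimes> (a \<otimes> b)" if g: "g \<in> carrier G" for g
    proof -
      have "a \<otimes> b \<otimes> g = a \<otimes> g \<otimes> b"
        using carrier[OF a] carrier[OF b] g comm[OF b g] by (simp add: m_assoc)
      also have "\<dots> = g \<otimes> (a \<otimes> b)"
        using carrier[OF a] carrier[OF b] g comm[OF a g] by (simp add: m_assoc)
      finally show ?thesis .
    qed
    then show "a \<otimes> b \<in> group_center G"
      using carrier[OF a] carrier[OF b] by (simp add: group_center_def)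
  qed
  moreover have "x \<otimes> h \<otimes> inv x = h" if x: "x \<in> carrier G" and h: "h \<in> group_center G" for x h
    using x carrier[OF h] comm[OF h x, symmetric] by (simp add: m_assoc)
  ultimately show ?thesis
    by (simp add: normal_inv_iff)
qed

section \<open>Additive functions on the reals\<close>

lemma real_additive_multiplicative_eq_id:
  fixes M :: "real \<Rightarrow> real"
  assumes add: "\<And>x y. M (x + y) = M x + M y"
    and mult: "\<And>x y. M (x * y) = M x * M y"
    and one: "M 1 = 1"
  shows "M x = x"
proof -
  have zero: "M 0 = 0"
    using add[of 0 0] by simp
  have minus: "M (- y) = - M y" for y
    using add[of y "- y"] zero by simp
  have mono: "M a \<le> M b" if "a \<le> b" for a b
  proof -
    have "M (b - a) = M (sqrt (b - a)) * M (sqrt (b - a))"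
      using that mult[of "sqrt (b - a)" "sqrt (b - a)"] by simp
    then have "0 \<le> M (b - a)"
      by simp
    then show ?thesis
      using add[of a "b - a"] by simp
  qed
  have of_nat: "M (of_nat n) = of_nat n" for n
    by (induction n) (simp_all add: zero add one)
  have of_int: "M (of_int k) = of_int k" for k
    using of_nat[of "nat k"] of_nat[of "nat (- k)"] minus[of "of_nat (nat (- k))"]
    by (cases "k \<ge> 0") simp_all
  \<comment> \<open>\<open>M\<close> is monotone and fixes the integers, so it moves \<open>n * x\<close> by at most one for every \<open>n\<close>.\<close>
  have bound: "\<bar>real n * (M x - x)\<bar> \<le> 1" for n
  proof -
    define k where "k = \<lfloor>real n * x\<rfloor>"
    have k: "of_int k \<le> real n * x" "real n * x \<le> of_int k + 1"
      unfolding k_def by linarith+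
    have "of_int k \<le> M (real n * x)" "M (real n * x) \<le> of_int k + 1"
      using mono[OF k(1)] mono[OF k(2)] of_int[of k] of_int[of "k + 1"] by simp_all
    moreover have "M (real n * x) = real n * M x"
      by (simp add: mult of_nat)
    ultimately show ?thesis
      using k by (simp add: right_diff_distrib abs_le_iff)
  qed
  show "M x = x"
  proof (rule ccontr)
    assume "M x \<noteq> x"
    then obtain n :: nat where "real n * \<bar>M x - x\<bar> > 1"
      using reals_Archimedean3[of "\<bar>M x - x\<bar>"] by auto
    with bound[of n] show False
      by (simp add: abs_mult)
  qed
qed

lemma additive_real_fun_scaling_factor:
  fixes L :: "real \<Rightarrow> real" and S :: "real \<Rightarrow> real \<Rightarrow> bool"
  assumes add: "\<And>s t. L (s + t) = L s + L t" and L1: "L 1 \<noteq> 0"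
    and scaling: "\<And>x y t. S x y \<Longrightarrow> L (x * t) = y * L t"
    and total: "\<And>x. x \<noteq> 0 \<Longrightarrow> \<exists>y. S x y"
    and "S x y"
  shows "y = x"
proof -
  define M where "M t = L t / L 1" for t
  have L0: "L 0 = 0"
    using add[of 0 0] by simp
  have factor: "y' = M x'" if "S x' y'" for x' y'
    using scaling[OF that, of 1] L1 by (simp add: M_def)
  have "M x = x"
  proof (rule real_additive_multiplicative_eq_id)
    show "M (s + t) = M s + M t" for s t
      by (simp add: M_def add add_divide_distrib)
    show "M 1 = 1"
      using L1 by (simp add: M_def)
    show "M (s * t) = M s * M t" for s t
    proof (cases "s = 0")
      case True
      then show ?thesis
        by (simp add: M_def L0)
    next
      case False
      then obtain y' where "S s y'"
        using total by blast
      then show ?thesis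
        using scaling[of s y' t] factor by (simp add: M_def)
    qed
  qed
  then show ?thesis
    using factor[OF \<open>S x y\<close>] by simp
qed

section \<open>Upper triangular matrices\<close>

definition upper_triangular :: "('a::zero)^('n::{finite,linorder})^('n::{finite,linorder}) \<Rightarrow> bool" where
  "upper_triangular A \<longleftrightarrow> (\<forall>i j. j < i \<longrightarrow> A $ i $ j = 0)"

lemma UT_carrier_iff: "A \<in> UT_carrier \<longleftrightarrow> invertible A \<and> upper_triangular A"
  by (simp add: UT_carrier_def upper_triangular_def)

lemma permutes_decreases_somewhere:
  fixes p :: "'n::{finite,linorder} \<Rightarrow> 'n"
  assumes p: "p permutes UNIV" and "p \<noteq> id"
  shows "\<exists>i. p i < i"
proof -
  let ?moved = "{i. p i \<noteq> i}"
  have "?moved \<noteq> {}"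
    using \<open>p \<noteq> id\<close> by (auto simp: fun_eq_iff)
  then have m: "Max ?moved \<in> ?moved"
    by (intro Max_in) auto
  then have "p (Max ?moved) \<in> ?moved"
    using permutes_inj[OF p] by (auto dest: injD)
  then have "p (Max ?moved) \<le> Max ?moved"
    by (intro Max_ge) auto
  with m show ?thesis
    by (auto simp: order_le_less)
qed

lemma det_upper_triangular:
  fixes A :: "('a::comm_ring_1)^('n::{finite,linorder})^('n::{finite,linorder})"
  assumes "upper_triangular A"
  shows "det A = (\<Prod>i\<in>UNIV. A $ i $ i)"
proof -
  have "of_int (sign p) * (\<Prod>i\<in>UNIV. A $ i $ p i) = 0" if p: "p permutes UNIV" "p \<noteq> id" for p
  proof -
    obtain i where "p i < i"
      using permutes_decreases_somewhere[OF p] by blast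
    then have "A $ i $ p i = 0"
      using assms by (simp add: upper_triangular_def)
    then have "(\<Prod>i\<in>UNIV. A $ i $ p i) = 0"
      by (intro prod_zero) auto
    then show ?thesis
      by simp
  qed
  then have "det A = of_int (sign (id :: 'n \<Rightarrow> 'n)) * (\<Prod>i\<in>UNIV. A $ i $ id i)"
    unfolding det_def by (subst sum.mono_neutral_cong_right[of _ "{id}"])
      (auto simp: finite_permutations)
  then show ?thesis
    by simp
qed

lemma matrix_mult_nth_eq_single:
  fixes A :: "('a::semiring_1)^'k^'n" and B :: "'a^'m^'k"
  assumes "\<And>k. k \<noteq> l \<Longrightarrow> A $ i $ k * B $ k $ j = 0"
  shows "(A ** B) $ i $ j = A $ i $ l * B $ l $ j"
proof -
  have "(\<Sum>k\<in>UNIV - {l}. A $ i $ k * B $ k $ j) = 0"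
    using assms by (intro sum.neutral) auto
  then show ?thesis
    using sum.remove[of UNIV l "\<lambda>k. A $ i $ k * B $ k $ j"] by (simp add: matrix_matrix_mult_def)
qed

lemma upper_triangular_mult:
  fixes A B :: "('a::semiring_1)^('n::{finite,linorder})^('n::{finite,linorder})"
  assumes A: "upper_triangular A" and B: "upper_triangular B"
  shows "upper_triangular (A ** B)"
  unfolding upper_triangular_def
proof (intro allI impI)
  fix i j :: 'n
  assume "j < i"
  then have "A $ i $ k * B $ k $ j = 0" for k
    using A B unfolding upper_triangular_def by (metis leI less_le_trans mult_zero_left mult_zero_right)
  then show "(A ** B) $ i $ j = 0"
    by (simp add: matrix_matrix_mult_def)
qed

lemma upper_triangular_mult_diag:
  fixes A B :: "('a::semiring_1)^('n::{finite,linorder})^('n::{finite,linorder})"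
  assumes A: "upper_triangular A" and B: "upper_triangular B"
  shows "(A ** B) $ i $ i = A $ i $ i * B $ i $ i"
proof -
  have "A $ i $ k * B $ k $ i = 0" if "k \<noteq> i" for k
    using A B that unfolding upper_triangular_def by (cases k i rule: linorder_cases) auto
  then show ?thesis
    by (rule matrix_mult_nth_eq_single)
qed

lemma upper_triangular_diag_nonzero:
  fixes A :: "('a::field)^('n::{finite,linorder})^('n::{finite,linorder})"
  assumes "upper_triangular A" "invertible A"
  shows "A $ i $ i \<noteq> 0"
  using assms det_upper_triangular[of A] by (simp add: invertible_det_nz)

lemma upper_triangular_right_inverse:
  fixes A B :: "('a::field)^('n::{finite,linorder})^('n::{finite,linorder})"
  assumes A: "upper_triangular A" "invertible A" and AB: "A ** B = mat 1"
  shows "upper_triangular B"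
  unfolding upper_triangular_def
proof (rule ccontr)
  assume "\<not> (\<forall>i j. j < i \<longrightarrow> B $ i $ j = 0)"
  then obtain i j where "j < i" "B $ i $ j \<noteq> 0"
    by blast
  \<comment> \<open>the lowest nonzero entry of column \<open>j\<close> below the diagonal would survive in \<open>A ** B\<close>\<close>
  let ?S = "{i. j < i \<and> B $ i $ j \<noteq> 0}"
  define m where "m = Max ?S"
  have m: "j < m" "B $ m $ j \<noteq> 0"
    using Max_in[of ?S] \<open>j < i\<close> \<open>B $ i $ j \<noteq> 0\<close> unfolding m_def by auto
  have below: "B $ k $ j = 0" if "m < k" for k
  proof (rule ccontr)
    assume "B $ k $ j \<noteq> 0"
    then have "k \<le> m"
      using that m(1) unfolding m_def by simp
    with that show False
      by simp
  qed
  have "A $ m $ k * B $ k $ j = 0" if "k \<noteq> m" for k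
    using A(1) below that unfolding upper_triangular_def by (cases k m rule: linorder_cases) auto
  then have "(A ** B) $ m $ j = A $ m $ m * B $ m $ j"
    by (rule matrix_mult_nth_eq_single)
  also have "\<dots> \<noteq> 0"
    using m upper_triangular_diag_nonzero[OF A] by simp
  finally have "(A ** B) $ m $ j \<noteq> 0" .
  moreover have "m \<noteq> j"
    using m(1) by simp
  ultimately show False
    using AB by (simp add: mat_def)
qed

lemma mat_mult_eq_scaleR: "mat l ** A = l *\<^sub>R (A :: real^'n^'m)"
  by (simp add: vec_eq_iff matrix_matrix_mult_def mat_def if_distrib[of "\<lambda>x. x * _"] cong: if_cong)

lemma scaleR_mat: "c *\<^sub>R (mat d :: real^'n^'n) = mat (c * d)"
  by (simp add: vec_eq_iff mat_def)

lemma mult_mat_eq_scaleR: "(A :: real^'n^'m) ** mat l = l *\<^sub>R A"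
  by (simp add: vec_eq_iff matrix_matrix_mult_def mat_def if_distrib[of "\<lambda>x. _ * x"] mult.commute
      cong: if_cong)

lemma matrix_add_rdistrib: "(B + C) ** A = B ** A + C ** A"
  by (vector matrix_matrix_mult_def sum.distrib[symmetric] field_simps)

type_synonym 'n sqmat = "real^'n^'n"

lemma UT_group_simps [simp]:
  "carrier UT_group = UT_carrier" "mult UT_group = (**)" "one UT_group = mat 1"
  by (simp_all add: UT_group_def)

lemma group_UT_group: "group (UT_group :: ('n::{finite,linorder}) sqmat monoid)"
proof (rule groupI)
  fix x y :: "'n sqmat"
  assume "x \<in> carrier UT_group" "y \<in> carrier UT_group"
  then show "x \<otimes>\<^bsub>UT_group\<^esub> y \<in> carrier UT_group"
    by (simp add: UT_carrier_iff invertible_mult upper_triangular_mult)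
next
  have "invertible (mat 1 :: 'n sqmat)"
    unfolding invertible_def by (intro exI[of _ "mat 1"]) simp
  then show "\<one>\<^bsub>UT_group\<^esub> \<in> carrier (UT_group :: 'n sqmat monoid)"
    by (simp add: UT_carrier_iff upper_triangular_def mat_def)
next
  fix x y z :: "'n sqmat"
  show "x \<otimes>\<^bsub>UT_group\<^esub> y \<otimes>\<^bsub>UT_group\<^esub> z = x \<otimes>\<^bsub>UT_group\<^esub> (y \<otimes>\<^bsub>UT_group\<^esub> z)"
    by (simp add: matrix_mul_assoc)
next
  fix x :: "'n sqmat"
  show "\<one>\<^bsub>UT_group\<^esub> \<otimes>\<^bsub>UT_group\<^esub> x = x"
    by simp
next
  fix x :: "'n sqmat"
  assume x: "x \<in> carrier UT_group"
  then obtain y where y: "x ** y = mat 1" "y ** x = mat 1"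
    by (auto simp: UT_carrier_iff invertible_def)
  then have "y \<in> UT_carrier"
    using x upper_triangular_right_inverse[of x y] by (auto simp: UT_carrier_iff invertible_def)
  then show "\<exists>y\<in>carrier UT_group. y \<otimes>\<^bsub>UT_group\<^esub> x = \<one>\<^bsub>UT_group\<^esub>"
    using y by auto
qed

lemma UT_mult_closed: "g \<in> UT_carrier \<Longrightarrow> h \<in> UT_carrier \<Longrightarrow> g ** h \<in> UT_carrier"
  using group.subgroup_self[OF group_UT_group] subgroup.m_closed by fastforce

lemma UT_inv:
  assumes "g \<in> UT_carrier"
  shows "inv\<^bsub>UT_group\<^esub> g \<in> UT_carrier" "g ** inv\<^bsub>UT_group\<^esub> g = mat 1" "inv\<^bsub>UT_group\<^esub> g ** g = mat 1"
  using assms group.inv_closed[OF group_UT_group] group.r_inv[OF group_UT_group]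
    group.l_inv[OF group_UT_group] by fastforce+

lemma UT_inv_eq:
  assumes "g \<in> UT_carrier" "h \<in> UT_carrier" "h ** g = mat 1"
  shows "inv\<^bsub>UT_group\<^esub> g = h"
  using group.inv_equality[OF group_UT_group, of h g] assms by simp

lemma UT_diag_nonzero: "g \<in> UT_carrier \<Longrightarrow> g $ i $ i \<noteq> 0"
  by (simp add: UT_carrier_iff upper_triangular_diag_nonzero)

lemma UT_diag_mult: "g \<in> UT_carrier \<Longrightarrow> h \<in> UT_carrier \<Longrightarrow> (g ** h) $ i $ i = g $ i $ i * h $ i $ i"
  by (simp add: UT_carrier_iff upper_triangular_mult_diag)

lemma UT_diag_inv:
  assumes g: "g \<in> UT_carrier"
  shows "(inv\<^bsub>UT_group\<^esub> g) $ i $ i = 1 / g $ i $ i"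
proof -
  have "g $ i $ i * (inv\<^bsub>UT_group\<^esub> g) $ i $ i = 1"
    using UT_diag_mult[OF g UT_inv(1)[OF g], of i] UT_inv(2)[OF g] by (simp add: mat_def)
  then show ?thesis
    using UT_diag_nonzero[OF g] by (simp add: field_simps)
qed

lemma UT_commutator_diag:
  assumes a: "a \<in> UT_carrier" and b: "b \<in> UT_carrier"
  shows "(a ** b ** inv\<^bsub>UT_group\<^esub> a ** inv\<^bsub>UT_group\<^esub> b) $ i $ i = 1"
  using UT_diag_nonzero[OF a, of i] UT_diag_nonzero[OF b, of i]
  by (simp add: a b UT_inv UT_mult_closed UT_diag_mult UT_diag_inv)

section \<open>Elementary matrices and the centre\<close>

definition matrix_unit :: "'n::finite \<Rightarrow> 'n \<Rightarrow> 'n sqmat" where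
  "matrix_unit i j = (\<chi> a b. if a = i \<and> b = j then 1 else 0)"

lemma matrix_unit_nth [simp]: "matrix_unit i j $ a $ b = (if a = i \<and> b = j then 1 else 0)"
  by (simp add: matrix_unit_def)

lemma mult_matrix_unit_nth: "(A ** matrix_unit i j) $ a $ b = (if b = j then A $ a $ i else 0)"
  by (simp add: matrix_matrix_mult_def if_distrib[of "\<lambda>x. _ * x"] cong: if_cong)

lemma matrix_unit_mult_nth: "(matrix_unit i j ** A) $ a $ b = (if a = i then A $ j $ b else 0)"
  by (simp add: matrix_matrix_mult_def if_distrib[of "\<lambda>x. x * _"] cong: if_cong)

lemma matrix_unit_mult_matrix_unit:
  "matrix_unit i j ** matrix_unit k l = (if j = k then matrix_unit i l else 0)"
  by (auto simp: vec_eq_iff mult_matrix_unit_nth)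

definition elementary :: "'n::finite \<Rightarrow> 'n \<Rightarrow> real \<Rightarrow> 'n sqmat" where
  "elementary i j c = mat 1 + c *\<^sub>R matrix_unit i j"

lemma elementary_nth: "elementary i j c $ a $ b = (if a = b then 1 else 0) + (if a = i \<and> b = j then c else 0)"
  by (simp add: elementary_def mat_def)

lemma elementary_zero [simp]: "elementary i j 0 = mat 1"
  by (simp add: elementary_def)

lemma elementary_mult:
  "elementary i j a ** elementary i j b = elementary i j (a + b + (if i = j then a * b else 0))"
  by (simp add: elementary_def matrix_add_ldistrib matrix_add_rdistrib matrix_scalar_ac
      scalar_matrix_assoc[symmetric] matrix_unit_mult_matrix_unit algebra_simps)

lemma elementary_in_UT_carrier:
  assumes "i \<le> j" and "i = j \<Longrightarrow> c \<noteq> -1"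
  shows "elementary i j c \<in> UT_carrier"
proof -
  define c' where "c' = (if i = j then - c / (1 + c) else - c)"
  have "1 + c \<noteq> 0" if "i = j"
    using assms(2)[OF that] by linarith
  then have "c + c' + (if i = j then c * c' else 0) = 0"
    by (cases "i = j") (simp_all add: c'_def field_simps)
  moreover have "c' + c + (if i = j then c' * c else 0) = c + c' + (if i = j then c * c' else 0)"
    by (simp add: mult.commute)
  ultimately have "elementary i j c ** elementary i j c' = mat 1" "elementary i j c' ** elementary i j c = mat 1"
    by (simp_all only: elementary_mult elementary_zero)
  then have "invertible (elementary i j c)"
    unfolding invertible_def by blast
  moreover have "upper_triangular (elementary i j c)"
    using assms(1) by (auto simp: upper_triangular_def elementary_nth)
  ultimately show ?thesis
    by (simp add: UT_carrier_iff)
qed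

lemma commutes_matrix_unit_if_commutes_elementary:
  assumes "A ** elementary i j c = elementary i j c ** A" "c \<noteq> 0"
  shows "A ** matrix_unit i j = matrix_unit i j ** A"
proof -
  have "A + c *\<^sub>R (A ** matrix_unit i j) = A + c *\<^sub>R (matrix_unit i j ** A)"
    using assms(1) unfolding elementary_def
    by (simp add: matrix_add_ldistrib matrix_add_rdistrib matrix_scalar_ac scalar_matrix_assoc[symmetric])
  then show ?thesis
    using assms(2) by simp
qed

lemma commutes_matrix_unit_nth:
  assumes "A ** matrix_unit i j = matrix_unit i j ** A"
  shows "a \<noteq> i \<Longrightarrow> A $ a $ i = 0" "b \<noteq> j \<Longrightarrow> A $ j $ b = 0" "A $ i $ i = A $ j $ j"
    using arg_cong[OF assms, of "\<lambda>M. M $ a $ j"] arg_cong[OF assms, of "\<lambda>M. M $ i $ b"]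
      arg_cong[OF assms, of "\<lambda>M. M $ i $ j"]
    by (simp_all add: mult_matrix_unit_nth matrix_unit_mult_nth)

lemma elementary_commutator:
  assumes "i \<noteq> j"
  shows "elementary i i 1 ** elementary i j 1 ** elementary i i (-1/2) ** elementary i j (-1) = elementary i j 1"
proof -
  \<comment> \<open>conjugating by \<open>diag(1, .., 2, .., 1)\<close> doubles the entry \<open>(i, j)\<close>\<close>
  have "elementary i i 1 ** matrix_unit i j = 2 *\<^sub>R matrix_unit i j"
    by (auto simp: vec_eq_iff mult_matrix_unit_nth elementary_nth)
  moreover have "matrix_unit i j ** elementary i i (-1/2) = matrix_unit i j"
    using assms by (auto simp: vec_eq_iff matrix_unit_mult_nth elementary_nth)
  moreover have "elementary i i 1 ** elementary i i (-1/2) = mat 1"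
    by (simp add: elementary_mult)
  ultimately have "elementary i i 1 ** elementary i j 1 ** elementary i i (-1/2) = elementary i j 2"
    by (simp add: elementary_def[of i j] matrix_add_ldistrib matrix_add_rdistrib matrix_scalar_ac
        scalar_matrix_assoc[symmetric] matrix_mul_assoc[symmetric])
  then show ?thesis
    using assms by (simp add: elementary_mult)
qed

definition first_index :: "'n::{finite,linorder}" where
  "first_index = Min UNIV"

definition last_index :: "'n::{finite,linorder}" where
  "last_index = Max UNIV"

lemma first_index_le: "first_index \<le> i"
  by (simp add: first_index_def)

lemma le_last_index: "i \<le> last_index"
  by (simp add: last_index_def)

lemma first_index_less_last_index:
  assumes "CARD('n::{finite,linorder}) \<ge> 2"
  shows "(first_index :: 'n) < last_index"
proof (rule ccontr)
  assume "\<not> (first_index :: 'n) < last_index"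
  then have "i = first_index" for i :: 'n
    using first_index_le[of i] le_last_index[of i] by (meson order.antisym order.trans not_less)
  then have "(UNIV :: 'n set) = {first_index}"
    by auto
  then have "CARD('n) = card {first_index :: 'n}"
    by (rule arg_cong)
  with assms show False
    by simp
qed

lemma first_index_neq_last_index:
  assumes "CARD('n::{finite,linorder}) \<ge> 2"
  shows "(first_index :: 'n) \<noteq> last_index"
  using first_index_less_last_index[OF assms] by simp

lemma commutes_upper_matrix_units_nth:
  fixes A :: "('n::{finite,linorder}) sqmat"
  assumes "\<And>i j. i < j \<Longrightarrow> A ** matrix_unit i j = matrix_unit i j ** A"
  shows "A $ a $ b = (if a = b then A $ first_index $ first_index
      else if a = first_index \<and> b = last_index then A $ first_index $ last_index else 0)"
proof -
  have "A $ a $ a = A $ first_index $ first_index"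
    using commutes_matrix_unit_nth(3)[OF assms, of first_index a] first_index_le[of a]
    by (cases "a = first_index") auto
  moreover have "A $ a $ b = 0" if "a \<noteq> b" "b \<noteq> last_index"
    using commutes_matrix_unit_nth(1)[OF assms, of b last_index] that le_last_index[of b] by simp
  moreover have "A $ a $ b = 0" if "a \<noteq> b" "a \<noteq> first_index"
    using commutes_matrix_unit_nth(2)[OF assms, of first_index a] that first_index_le[of a] by simp
  ultimately show ?thesis
    by auto
qed

lemma group_center_UT_group:
  "group_center (UT_group :: ('n::{finite,linorder}) sqmat monoid) = {mat l | l. l \<noteq> 0}"
proof
  show "group_center (UT_group :: 'n sqmat monoid) \<subseteq> {mat l | l. l \<noteq> 0}"
  proof
    fix z :: "'n sqmat"
    assume z: "z \<in> group_center UT_group"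
    then have central: "z ** g = g ** z" if "g \<in> UT_carrier" for g
      using that by (simp add: group_center_def)
    have units: "z ** matrix_unit i j = matrix_unit i j ** z" if "i \<le> j" for i j
    proof (rule commutes_matrix_unit_if_commutes_elementary)
      show "z ** elementary i j 1 = elementary i j 1 ** z"
        using that by (intro central elementary_in_UT_carrier) auto
    qed simp
    have entries: "z $ a $ b = (if a = b then z $ first_index $ first_index
        else if a = first_index \<and> b = last_index then z $ first_index $ last_index else 0)" for a b
      by (rule commutes_upper_matrix_units_nth) (simp add: units less_imp_le)
    have corner_zero: "z $ first_index $ last_index = 0" if "(first_index :: 'n) \<noteq> last_index"
      using commutes_matrix_unit_nth(1)[OF units[OF order.refl], of first_index last_index] that by simp
    define c where "c = z $ first_index $ first_index"
    have "z $ a $ b = mat c $ a $ b" for a b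
      using entries[of a b] corner_zero by (auto simp: mat_def c_def)
    then have "z = mat c"
      by (simp add: vec_eq_iff)
    moreover have "c \<noteq> 0"
      using z by (simp add: c_def group_center_def UT_diag_nonzero)
    ultimately show "z \<in> {mat l | l. l \<noteq> 0}"
      by blast
  qed
next
  show "{mat l | l. l \<noteq> 0} \<subseteq> group_center (UT_group :: 'n sqmat monoid)"
  proof clarify
    fix l :: real
    assume "l \<noteq> 0"
    then have "mat l ** mat (1 / l) = (mat 1 :: 'n sqmat)" "mat (1 / l) ** mat l = (mat 1 :: 'n sqmat)"
      by (simp_all add: mat_mult_eq_scaleR scaleR_mat)
    then have "invertible (mat l :: 'n sqmat)"
      unfolding invertible_def by blast
    moreover have "upper_triangular (mat l :: 'n sqmat)"
      by (simp add: upper_triangular_def mat_def)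
    ultimately show "mat l \<in> group_center (UT_group :: 'n sqmat monoid)"
      by (simp add: group_center_def UT_carrier_iff mat_mult_eq_scaleR mult_mat_eq_scaleR)
  qed
qed

section \<open>The projective group and its character\<close>

abbreviation UT_center :: "('n::{finite,linorder}) sqmat set" where
  "UT_center \<equiv> group_center UT_group"

abbreviation PUT_group :: "('n::{finite,linorder}) sqmat set monoid" where
  "PUT_group \<equiv> UT_group Mod UT_center"

abbreviation proj_class :: "('n::{finite,linorder}) sqmat \<Rightarrow> 'n sqmat set" where
  "proj_class g \<equiv> UT_center #>\<^bsub>UT_group\<^esub> g"

lemma proj_class_eq: "proj_class g = {l *\<^sub>R g | l. l \<noteq> 0}"
  by (auto simp: r_coset_def group_center_UT_group mat_mult_eq_scaleR)

lemma proj_class_eq_iff: "proj_class g = proj_class h \<longleftrightarrow> (\<exists>l. l \<noteq> 0 \<and> g = l *\<^sub>R h)"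
proof
  assume "proj_class g = proj_class h"
  moreover have "g \<in> proj_class g"
    unfolding proj_class_eq by (auto intro!: exI[of _ 1])
  ultimately show "\<exists>l. l \<noteq> 0 \<and> g = l *\<^sub>R h"
    unfolding proj_class_eq by auto
next
  assume "\<exists>l. l \<noteq> 0 \<and> g = l *\<^sub>R h"
  then obtain l where l: "l \<noteq> 0" and g: "g = l *\<^sub>R h"
    by blast
  have "m *\<^sub>R g \<in> {k *\<^sub>R h | k. k \<noteq> 0}" if "m \<noteq> 0" for m
    using that l by (auto simp: g intro!: exI[of _ "m * l"])
  moreover have "k *\<^sub>R h \<in> {m *\<^sub>R g | m. m \<noteq> 0}" if "k \<noteq> 0" for k
    using that l by (auto simp: g intro!: exI[of _ "k / l"])
  ultimately show "proj_class g = proj_class h"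
    unfolding proj_class_eq by blast
qed

lemma UT_center_normal: "UT_center \<lhd> (UT_group :: ('n::{finite,linorder}) sqmat monoid)"
  by (rule group_center_normal[OF group_UT_group])

lemma group_PUT_group: "group (PUT_group :: ('n::{finite,linorder}) sqmat set monoid)"
  by (rule normal.factorgroup_is_group[OF UT_center_normal])

lemma carrier_PUT_group: "carrier PUT_group = proj_class ` UT_carrier"
  by (simp add: carrier_FactGroup)

lemma proj_class_mult:
  "g \<in> UT_carrier \<Longrightarrow> h \<in> UT_carrier \<Longrightarrow> proj_class g \<otimes>\<^bsub>PUT_group\<^esub> proj_class h = proj_class (g ** h)"
  using normal.rcos_sum[OF UT_center_normal, of g h] by simp

lemma proj_class_inv:
  assumes "g \<in> UT_carrier"
  shows "inv\<^bsub>PUT_group\<^esub> (proj_class g) = proj_class (inv\<^bsub>UT_group\<^esub> g)"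
proof -
  have "inv\<^bsub>PUT_group\<^esub> (proj_class g) = set_inv\<^bsub>UT_group\<^esub> (proj_class g)"
    using assms by (intro normal.inv_FactGroup[OF UT_center_normal]) (simp add: carrier_PUT_group)
  also have "\<dots> = proj_class (inv\<^bsub>UT_group\<^esub> g)"
    using assms by (intro normal.rcos_inv[OF UT_center_normal]) simp
  finally show ?thesis .
qed

lemma proj_class_commutator:
  assumes "a \<in> UT_carrier" "b \<in> UT_carrier"
  shows "proj_class a \<otimes>\<^bsub>PUT_group\<^esub> proj_class b \<otimes>\<^bsub>PUT_group\<^esub> inv\<^bsub>PUT_group\<^esub> (proj_class a)
      \<otimes>\<^bsub>PUT_group\<^esub> inv\<^bsub>PUT_group\<^esub> (proj_class b)
    = proj_class (a ** b ** inv\<^bsub>UT_group\<^esub> a ** inv\<^bsub>UT_group\<^esub> b)"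
  using assms by (simp add: proj_class_inv proj_class_mult UT_inv UT_mult_closed del: mult_FactGroup)

definition diag_ratio :: "('n::{finite,linorder}) sqmat \<Rightarrow> real" where
  "diag_ratio g = g $ first_index $ first_index / g $ last_index $ last_index"

(* SOME picks an arbitrary representative; the value does not depend on it (proj_ratio_proj_class). *)
definition proj_ratio :: "('n::{finite,linorder}) sqmat set \<Rightarrow> real" where
  "proj_ratio U = diag_ratio (SOME g. g \<in> U)"

lemma diag_ratio_mult: "g \<in> UT_carrier \<Longrightarrow> h \<in> UT_carrier \<Longrightarrow> diag_ratio (g ** h) = diag_ratio g * diag_ratio h"
  by (simp add: diag_ratio_def UT_diag_mult)

lemma proj_ratio_proj_class: "proj_ratio (proj_class g) = diag_ratio g"
proof -
  have "(SOME h. h \<in> proj_class g) \<in> proj_class g"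
    by (rule someI[of _ g]) (auto simp: proj_class_eq intro!: exI[of _ 1])
  then obtain l where "l \<noteq> 0" "(SOME h. h \<in> proj_class g) = l *\<^sub>R g"
    unfolding proj_class_eq by blast
  then show ?thesis
    by (simp add: proj_ratio_def diag_ratio_def)
qed

lemma proj_ratio_mult:
  assumes "U \<in> carrier PUT_group" "V \<in> carrier PUT_group"
  shows "proj_ratio (U \<otimes>\<^bsub>PUT_group\<^esub> V) = proj_ratio U * proj_ratio V"
  using assms by (auto simp: carrier_PUT_group proj_class_mult proj_ratio_proj_class UT_mult_closed diag_ratio_mult
      simp del: mult_FactGroup)

lemma diag_ratio_surj:
  assumes "CARD('n::{finite,linorder}) \<ge> 2" "x \<noteq> 0"
  shows "\<exists>g \<in> (UT_carrier :: 'n sqmat set). diag_ratio g = x"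
proof
  show "elementary first_index first_index (x - 1) \<in> (UT_carrier :: 'n sqmat set)"
    using assms(2) by (simp add: elementary_in_UT_carrier)
  show "diag_ratio (elementary first_index first_index (x - 1) :: 'n sqmat) = x"
    using first_index_neq_last_index[OF assms(1)] by (simp add: diag_ratio_def elementary_nth)
qed

lemma infinite_proj_ratio_image:
  assumes "CARD('n::{finite,linorder}) \<ge> 2"
  shows "infinite (proj_ratio ` (carrier PUT_group :: 'n sqmat set set))"
proof
  assume finite: "finite (proj_ratio ` (carrier PUT_group :: 'n sqmat set set))"
  have "- {0} \<subseteq> proj_ratio ` (carrier PUT_group :: 'n sqmat set set)"
    using diag_ratio_surj[OF assms] by (force simp: carrier_PUT_group proj_ratio_proj_class)
  then have "finite (- {0 :: real})"
    using finite finite_subset by blast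
  then show False
    by (simp add: infinite_UNIV_char_0)
qed

section \<open>The corner subgroup\<close>

definition corner :: "real \<Rightarrow> ('n::{finite,linorder}) sqmat" where
  "corner t = elementary first_index last_index t"

lemma upper_triangular_mult_corner_unit:
  assumes "upper_triangular K"
  shows "K ** matrix_unit first_index last_index = K $ first_index $ first_index *\<^sub>R matrix_unit first_index last_index"
    and "matrix_unit first_index last_index ** K = K $ last_index $ last_index *\<^sub>R matrix_unit first_index last_index"
proof -
  have "K $ a $ first_index = 0" if "a \<noteq> first_index" for a
    using assms order_le_neq_trans[OF first_index_le[of a]] that by (auto simp: upper_triangular_def)
  moreover have "K $ last_index $ b = 0" if "b \<noteq> last_index" for b
    using assms order_le_neq_trans[OF le_last_index[of b]] that by (auto simp: upper_triangular_def)
  ultimately show "K ** matrix_unit first_index last_index = K $ first_index $ first_index *\<^sub>R matrix_unit first_index last_index"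
    and "matrix_unit first_index last_index ** K = K $ last_index $ last_index *\<^sub>R matrix_unit first_index last_index"
    by (auto simp: vec_eq_iff mult_matrix_unit_nth matrix_unit_mult_nth)
qed

lemma corner_commutes:
  assumes "upper_triangular K" "K $ first_index $ first_index = K $ last_index $ last_index"
  shows "corner t ** K = K ** corner t"
  using assms
  by (simp add: corner_def elementary_def matrix_add_ldistrib matrix_add_rdistrib matrix_scalar_ac
      scalar_matrix_assoc[symmetric] upper_triangular_mult_corner_unit)

lemma corner_conj:
  assumes g: "g \<in> UT_carrier"
  shows "g ** corner t ** inv\<^bsub>UT_group\<^esub> g = corner (diag_ratio g * t)"
proof -
  let ?h = "inv\<^bsub>UT_group\<^esub> g" and ?E = "matrix_unit first_index last_index"
  have ut: "upper_triangular g" "upper_triangular ?h"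
    using g UT_inv(1)[OF g] by (simp_all add: UT_carrier_iff)
  have "g ** corner t ** ?h = g ** ?h + t *\<^sub>R (g ** ?E ** ?h)"
    by (simp add: corner_def elementary_def matrix_add_ldistrib matrix_add_rdistrib matrix_scalar_ac
        scalar_matrix_assoc[symmetric])
  also have "\<dots> = mat 1 + (t * g $ first_index $ first_index * ?h $ last_index $ last_index) *\<^sub>R ?E"
    using ut UT_inv(2)[OF g]
    by (simp add: upper_triangular_mult_corner_unit scalar_matrix_assoc[symmetric] matrix_mul_assoc[symmetric])
  also have "\<dots> = corner (diag_ratio g * t)"
    by (simp add: corner_def elementary_def diag_ratio_def UT_diag_inv[OF g])
  finally show ?thesis .
qed

lemma commutes_matrix_unit_if_centralizes_commutators:
  assumes g: "g \<in> UT_carrier" and centralizes: "centralizes_commutators PUT_group (proj_class g)"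
    and "i < j"
  shows "g ** matrix_unit i j = matrix_unit i j ** g"
proof -
  let ?D = "elementary i i 1" and ?X = "elementary i j 1"
  have ij: "i \<noteq> j"
    using \<open>i < j\<close> by simp
  have D: "?D \<in> UT_carrier" and X: "?X \<in> UT_carrier"
    using \<open>i < j\<close> by (simp_all add: elementary_in_UT_carrier)
  have inv_D: "inv\<^bsub>UT_group\<^esub> ?D = elementary i i (-1/2)"
    by (rule UT_inv_eq[OF D]) (simp_all add: elementary_in_UT_carrier elementary_mult)
  have inv_X: "inv\<^bsub>UT_group\<^esub> ?X = elementary i j (-1)"
    using \<open>i < j\<close> ij by (intro UT_inv_eq[OF X]) (simp_all add: elementary_in_UT_carrier elementary_mult)
  have "proj_class ?X = proj_class ?D \<otimes>\<^bsub>PUT_group\<^esub> proj_class ?X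
      \<otimes>\<^bsub>PUT_group\<^esub> inv\<^bsub>PUT_group\<^esub> (proj_class ?D) \<otimes>\<^bsub>PUT_group\<^esub> inv\<^bsub>PUT_group\<^esub> (proj_class ?X)"
    by (simp only: proj_class_commutator[OF D X] inv_D inv_X elementary_commutator[OF ij])
  moreover have "proj_class ?D \<in> carrier PUT_group" "proj_class ?X \<in> carrier PUT_group"
    using D X by (simp_all add: carrier_PUT_group)
  ultimately have "proj_class ?X \<in> derived_set PUT_group (carrier PUT_group)"
    by blast
  then have "proj_class g \<otimes>\<^bsub>PUT_group\<^esub> proj_class ?X = proj_class ?X \<otimes>\<^bsub>PUT_group\<^esub> proj_class g"
    using centralizes unfolding centralizes_commutators_def by blast
  then have "proj_class (g ** ?X) = proj_class (?X ** g)"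
    using g X by (simp add: proj_class_mult del: mult_FactGroup)
  then obtain l where l: "g ** ?X = l *\<^sub>R (?X ** g)"
    using proj_class_eq_iff by blast
  have "?X $ i $ i = 1"
    using ij by (simp add: elementary_nth)
  then have "g $ i $ i = l * g $ i $ i"
    using arg_cong[OF l, of "\<lambda>M. M $ i $ i"] UT_diag_mult[OF g X] UT_diag_mult[OF X g] by simp
  then have "l = 1"
    using UT_diag_nonzero[OF g] by simp
  then show ?thesis
    using l by (intro commutes_matrix_unit_if_commutes_elementary[where c = 1]) simp_all
qed

context
  assumes two: "CARD('n::{finite,linorder}) \<ge> 2"
begin

lemma corner_in_UT_carrier: "(corner t :: 'n sqmat) \<in> UT_carrier"
  using first_index_less_last_index[OF two] by (simp add: corner_def elementary_in_UT_carrier)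

lemma corner_add: "corner s ** corner t = (corner (s + t) :: 'n sqmat)"
  using first_index_neq_last_index[OF two] by (simp add: corner_def elementary_mult)

lemma proj_class_corner_inj:
  assumes "proj_class (corner s) = proj_class (corner t :: 'n sqmat)"
  shows "s = t"
proof -
  obtain l where "corner s = l *\<^sub>R (corner t :: 'n sqmat)"
    using assms proj_class_eq_iff by blast
  then have "corner s $ first_index $ j = l * (corner t :: 'n sqmat) $ first_index $ j" for j
    by simp
  from this[of first_index] this[of last_index] show ?thesis
    using first_index_neq_last_index[OF two] by (simp add: corner_def elementary_nth)
qed

lemma proj_class_corner_add:
  "proj_class (corner s) \<otimes>\<^bsub>PUT_group\<^esub> proj_class (corner t) = proj_class (corner (s + t) :: 'n sqmat)"
  by (simp add: proj_class_mult corner_in_UT_carrier corner_add del: mult_FactGroup)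

lemma proj_class_corner_conj:
  assumes "g \<in> (UT_carrier :: 'n sqmat set)"
  shows "proj_class g \<otimes>\<^bsub>PUT_group\<^esub> proj_class (corner t) \<otimes>\<^bsub>PUT_group\<^esub> inv\<^bsub>PUT_group\<^esub> (proj_class g)
    = proj_class (corner (diag_ratio g * t))"
  using assms
  by (simp add: proj_class_inv proj_class_mult corner_in_UT_carrier UT_inv UT_mult_closed corner_conj
      del: mult_FactGroup)

lemma centralizes_commutators_proj_class_corner:
  "centralizes_commutators PUT_group (proj_class (corner t :: 'n sqmat))"
  unfolding centralizes_commutators_def
proof
  fix k assume "k \<in> derived_set PUT_group (carrier PUT_group :: 'n sqmat set set)"
  then obtain A B where "A \<in> carrier PUT_group" "B \<in> carrier PUT_group"
    and k: "k = A \<otimes>\<^bsub>PUT_group\<^esub> B \<otimes>\<^bsub>PUT_group\<^esub> inv\<^bsub>PUT_group\<^esub> A \<otimes>\<^bsub>PUT_group\<^esub> inv\<^bsub>PUT_group\<^esub> B"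
    by blast
  then obtain a b where a: "a \<in> UT_carrier" "A = proj_class a" and b: "b \<in> UT_carrier" "B = proj_class b"
    unfolding carrier_PUT_group by blast
  define K where "K = a ** b ** inv\<^bsub>UT_group\<^esub> a ** inv\<^bsub>UT_group\<^esub> b"
  have "k = proj_class K"
    unfolding k a b K_def by (rule proj_class_commutator[OF a(1) b(1)])
  moreover have K: "K \<in> UT_carrier"
    using a b by (simp add: K_def UT_inv UT_mult_closed)
  moreover have "corner t ** K = K ** corner t"
    using K UT_commutator_diag[OF a(1) b(1)] by (intro corner_commutes) (simp_all add: K_def UT_carrier_iff)
  ultimately show "proj_class (corner t) \<otimes>\<^bsub>PUT_group\<^esub> k = k \<otimes>\<^bsub>PUT_group\<^esub> proj_class (corner t)"
    by (simp add: proj_class_mult corner_in_UT_carrier del: mult_FactGroup)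
qed

lemma proj_class_eq_corner_if_centralizes_commutators:
  assumes g: "g \<in> (UT_carrier :: 'n sqmat set)"
    and "centralizes_commutators PUT_group (proj_class g)"
  shows "\<exists>t. proj_class g = proj_class (corner t)"
proof -
  have entries: "g $ a $ b = (if a = b then g $ first_index $ first_index
      else if a = first_index \<and> b = last_index then g $ first_index $ last_index else 0)" for a b
    by (rule commutes_upper_matrix_units_nth) (rule commutes_matrix_unit_if_centralizes_commutators[OF assms])
  define c where "c = g $ first_index $ first_index"
  have "c \<noteq> 0"
    using UT_diag_nonzero[OF g] by (simp add: c_def)
  define t where "t = g $ first_index $ last_index / c"
  have "g $ a $ b = (c *\<^sub>R corner t) $ a $ b" for a b
    using entries[of a b] \<open>c \<noteq> 0\<close> first_index_neq_last_index[OF two]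
    by (auto simp: c_def t_def corner_def elementary_nth)
  then have "g = c *\<^sub>R corner t"
    by (simp add: vec_eq_iff)
  then show ?thesis
    using \<open>c \<noteq> 0\<close> proj_class_eq_iff by blast
qed

lemma automorphism_on_corners:
  fixes \<phi> :: "'n sqmat set \<Rightarrow> 'n sqmat set"
  assumes iso: "\<phi> \<in> iso PUT_group PUT_group"
  obtains L where "\<And>t. \<phi> (proj_class (corner t)) = proj_class (corner (L t) :: 'n sqmat)"
    and "\<And>s t. L (s + t) = L s + L t" and "L 1 \<noteq> 0"
proof -
  interpret group_hom PUT_group PUT_group \<phi>
    using iso by (simp add: group_hom_def group_hom_axioms_def iso_def group_PUT_group)
  have corner_carrier: "proj_class (corner t :: 'n sqmat) \<in> carrier PUT_group" for t
    using corner_in_UT_carrier by (simp add: carrier_PUT_group)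
  have "\<exists>s. \<phi> (proj_class (corner t)) = proj_class (corner s :: 'n sqmat)" for t
  proof -
    have "\<phi> (proj_class (corner t)) \<in> carrier PUT_group"
      using corner_carrier by simp
    then obtain g where g: "g \<in> UT_carrier" "\<phi> (proj_class (corner t)) = proj_class (g :: 'n sqmat)"
      by (auto simp: carrier_PUT_group)
    have "centralizes_commutators PUT_group (\<phi> (proj_class (corner t :: 'n sqmat)))"
      using centralizes_commutators_iso[OF group_PUT_group iso corner_carrier] centralizes_commutators_proj_class_corner
      by blast
    then show ?thesis
      using proj_class_eq_corner_if_centralizes_commutators[OF g(1)] g(2) by metis
  qed
  then obtain L where L: "\<And>t. \<phi> (proj_class (corner t)) = proj_class (corner (L t) :: 'n sqmat)"
    by metis
  have add: "L (s + t) = L s + L t" for s t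
  proof -
    have "proj_class (corner (L (s + t))) = \<phi> (proj_class (corner (s + t)) :: 'n sqmat set)"
      by (rule L[symmetric])
    also have "\<dots> = \<phi> (proj_class (corner s) \<otimes>\<^bsub>PUT_group\<^esub> proj_class (corner t))"
      by (simp only: proj_class_corner_add)
    also have "\<dots> = \<phi> (proj_class (corner s)) \<otimes>\<^bsub>PUT_group\<^esub> \<phi> (proj_class (corner t))"
      by (intro hom_mult corner_carrier)
    also have "\<dots> = proj_class (corner (L s + L t))"
      by (simp only: L proj_class_corner_add)
    finally show ?thesis
      by (rule proj_class_corner_inj)
  qed
  have "L 1 \<noteq> 0"
  proof
    assume "L 1 = 0"
    then have "\<phi> (proj_class (corner 1)) = \<phi> (proj_class (corner 0 :: 'n sqmat))"
      using L add[of 0 0] by simp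
    then have "proj_class (corner 1) = proj_class (corner 0 :: 'n sqmat)"
      using iso corner_carrier by (auto simp: iso_def bij_betw_def dest: inj_onD)
    then have "(1 :: real) = 0"
      by (rule proj_class_corner_inj)
    then show False
      by simp
  qed
  with L add that show ?thesis
    by blast
qed

lemma automorphism_corner_conj:
  fixes \<phi> :: "'n sqmat set \<Rightarrow> 'n sqmat set"
  assumes iso: "\<phi> \<in> iso PUT_group PUT_group"
    and L: "\<And>t. \<phi> (proj_class (corner t)) = proj_class (corner (L t))"
    and g: "g \<in> UT_carrier" and h: "h \<in> UT_carrier" and gh: "\<phi> (proj_class g) = proj_class h"
  shows "L (diag_ratio g * t) = diag_ratio h * L t"
proof -
  interpret group_hom PUT_group PUT_group \<phi>
    using iso by (simp add: group_hom_def group_hom_axioms_def iso_def group_PUT_group)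
  have carrier: "proj_class g \<in> carrier PUT_group" "proj_class (corner t :: 'n sqmat) \<in> carrier PUT_group"
    using g corner_in_UT_carrier by (simp_all add: carrier_PUT_group)
  have "proj_class (corner (L (diag_ratio g * t)))
      = \<phi> (proj_class g \<otimes>\<^bsub>PUT_group\<^esub> proj_class (corner t) \<otimes>\<^bsub>PUT_group\<^esub> inv\<^bsub>PUT_group\<^esub> (proj_class g))"
    by (simp only: L[symmetric] proj_class_corner_conj[OF g])
  also have "\<dots> = proj_class h \<otimes>\<^bsub>PUT_group\<^esub> proj_class (corner (L t)) \<otimes>\<^bsub>PUT_group\<^esub> inv\<^bsub>PUT_group\<^esub> (proj_class h)"
    using carrier by (simp add: gh L del: mult_FactGroup)
  also have "\<dots> = proj_class (corner (diag_ratio h * L t))"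
    by (simp only: proj_class_corner_conj[OF h])
  finally show ?thesis
    by (rule proj_class_corner_inj)
qed

lemma proj_ratio_automorphism:
  fixes \<phi> :: "'n sqmat set \<Rightarrow> 'n sqmat set"
  assumes iso: "\<phi> \<in> iso PUT_group PUT_group" and U: "U \<in> carrier PUT_group"
  shows "proj_ratio (\<phi> U) = proj_ratio U"
proof -
  interpret group_hom PUT_group PUT_group \<phi>
    using iso by (simp add: group_hom_def group_hom_axioms_def iso_def group_PUT_group)
  have image: "\<exists>h \<in> UT_carrier. \<phi> (proj_class g) = proj_class h" if "g \<in> UT_carrier" for g
  proof -
    have "proj_class g \<in> carrier PUT_group"
      using that by (simp add: carrier_PUT_group)
    then have "\<phi> (proj_class g) \<in> carrier PUT_group"
      by simp
    then show ?thesis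
      by (auto simp: carrier_PUT_group)
  qed
  obtain L where L: "\<And>t. \<phi> (proj_class (corner t)) = proj_class (corner (L t) :: 'n sqmat)"
    and add: "\<And>s t. L (s + t) = L s + L t" and L1: "L 1 \<noteq> 0"
    using automorphism_on_corners[OF iso] by blast
  define S where "S x y \<longleftrightarrow> (\<exists>g h. g \<in> UT_carrier \<and> h \<in> (UT_carrier :: 'n sqmat set) \<and>
      \<phi> (proj_class g) = proj_class h \<and> diag_ratio g = x \<and> diag_ratio h = y)" for x y
  have scaling: "L (x * t) = y * L t" if "S x y" for x y t
    using that automorphism_corner_conj[OF iso L] unfolding S_def by blast
  have total: "\<exists>y. S x y" if "x \<noteq> 0" for x
    using diag_ratio_surj[OF two that] image unfolding S_def by blast
  obtain g where g: "g \<in> UT_carrier" "U = proj_class g"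
    using U by (auto simp: carrier_PUT_group)
  obtain h where h: "h \<in> UT_carrier" "\<phi> U = proj_class h"
    using image[OF g(1)] g(2) by blast
  from g h have gh: "S (diag_ratio g) (diag_ratio h)"
    unfolding S_def by blast
  have "diag_ratio h = diag_ratio g"
    by (rule additive_real_fun_scaling_factor[of L S, OF add L1 _ total gh]) (rule scaling)
  with g h show ?thesis
    by (simp add: proj_ratio_proj_class)
qed

end

theorem proposition5p4:
  assumes "CARD('n::{finite,linorder}) \<ge> 2"
  shows "top_R_infinity
           (UT_group Mod group_center (UT_group :: (real^('n::{finite,linorder})^('n::{finite,linorder})) monoid))
           (quotient_group_topology (top_of_set (UT_carrier :: (real^('n::{finite,linorder})^('n::{finite,linorder})) set))
              (UT_group :: (real^('n::{finite,linorder})^('n::{finite,linorder})) monoid)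
              (group_center (UT_group :: (real^('n::{finite,linorder})^('n::{finite,linorder})) monoid)))"
proof -
  have "R_infinite PUT_group \<phi>" if iso: "\<phi> \<in> iso PUT_group PUT_group" for \<phi> :: "'n sqmat set \<Rightarrow> 'n sqmat set"
  proof (rule R_infinite_if_invariant_character[where f = proj_ratio, OF group_PUT_group _ proj_ratio_mult])
    show "\<phi> \<in> hom PUT_group PUT_group"
      using iso by (simp add: iso_def)
    show "proj_ratio (\<phi> U) = proj_ratio U" if "U \<in> carrier PUT_group" for U
      by (rule proj_ratio_automorphism[OF assms iso that])
    show "infinite (proj_ratio ` carrier (PUT_group :: 'n sqmat set monoid))"
      by (rule infinite_proj_ratio_image[OF assms])
  qed
  then show ?thesis
    unfolding top_R_infinity_def by blast
qed

end
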